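(* Let $n\ge 2$ and let $F_{2n}$ be the cubic multigraph obtained from the cycle $C_{2n}$ by adding a parallel edge to every second edge of the cycle. Then the eigenvalues of $F_{2n}$ are $\pm\sqrt{4\cos(2\pi j/n)+5}$ for $j=0,1,\dots,n-1$. Consequently, $1$ is an eigenvalue of $F_{2n}$ if and only if $n$ is even, in which case it is a simple eigenvalue.
   Context: The adjacency matrix of a multigraph has $(x,y)$-entry equal to the number of edges joining $x$ and $y$; eigenvalues are those of this matrix. An eigenvalue is simple if its eigenspace is $1$-dimensional. *)

theory Defs
  imports Complex_Main "Jordan_Normal_Form.Jordan_Normal_Form_Uniqueness"
begin

text \<open>The (x,y)-entry is the number of edges joining x and y.\<close>
definition F_adj :: "nat \<Rightarrow> real mat" where
  "F_adj n = mat (2*n) (2*n) (\<lambda>(i,j).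
     if j = (i + 1) mod (2*n) then (if even i then 2 else 1)
     else if i = (j + 1) mod (2*n) then (if even j then 2 else 1)
     else 0)"

end

theory Submission
  imports Defs "Jordan_Normal_Form.Jordan_Normal_Form_Existence"
begin

text \<open>
  Let w = exp(2 pi i j / n) and let v be the vector with v(2k) = w^k and v(2k+1) = c w^k.
  The rows of the adjacency matrix give
  (A v)(2k) = (2 c + c conj(w)) w^k and (A v)(2k+1) = (2 + w) w^k,
  so v is an eigenvector for lambda as soon as c (2 + conj w) = lambda and 2 + w = lambda c.
  Both hold for lambda = +-|2 + w| and c = +-sgn(2 + w), and |2 + w|^2 = 4 cos(2 pi j / n) + 5.
  The resulting 2n vectors are pairwise orthogonal (geometric sums of roots of unity), so the
  adjacency matrix is similar over the complex numbers to the diagonal matrix of these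
  eigenvalues, which gives the characteristic polynomial.  The value 1 = |2 + w| occurs only
  for w = -1, i.e. for 2j = n, and then as a simple root; as the characteristic polynomial
  splits over the reals, the Jordan normal form shows that its eigenspace is one-dimensional.
\<close>

lemma power_mod_eq_if_power_eq_1:
  fixes w :: "'a :: monoid_mult"
  assumes "w ^ n = 1"
  shows "w ^ (m mod n) = w ^ m"
proof -
  have "w ^ m = (w ^ n) ^ (m div n) * w ^ (m mod n)"
    by (subst mult_div_mod_eq[of n m, symmetric]) (simp only: power_add power_mult)
  with assms show ?thesis
    by simp
qed

lemma sum_lessThan_double: "(\<Sum>r<2 * (n::nat). g r) = (\<Sum>k<n. g (2 * k) + g (2 * k + 1))"
  by (induction n) (simp_all add: ac_simps)

lemma prod_lessThan_double: "(\<Prod>r<2 * (n::nat). g r) = (\<Prod>k<n. g (2 * k) * g (2 * k + 1))"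
  by (induction n) (simp_all add: ac_simps)

lemma cnj_mult_self_eq_1: "cmod z = 1 \<Longrightarrow> cnj z * z = 1"
proof -
  assume "cmod z = 1"
  then have "z * cnj z = 1"
    by (simp flip: complex_norm_square)
  then show ?thesis
    by (simp add: mult.commute)
qed

lemma cnj_power_mult_pred_mod:
  fixes w :: complex
  assumes w_n: "w ^ n = 1" and norm_w: "cmod w = 1" and n: "n \<noteq> 0"
  shows "w ^ ((k + n - 1) mod n) = w ^ k * cnj w"
proof -
  have step: "w ^ (k + n - 1) * w = w ^ k"
    using n w_n by (simp flip: power_Suc2 add: power_add)
  have "w ^ ((k + n - 1) mod n) = w ^ (k + n - 1)"
    by (rule power_mod_eq_if_power_eq_1[OF w_n])
  also have "\<dots> = w ^ (k + n - 1) * w * cnj w"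
    using cnj_mult_self_eq_1[OF norm_w] by (simp add: mult.assoc mult.commute)
  also have "\<dots> = w ^ k * cnj w"
    unfolding step ..
  finally show ?thesis .
qed

lemma cmod_two_plus_cis: "cmod (2 + cis t) = sqrt (4 * cos t + 5)"
proof -
  have "(2 + cos t)\<^sup>2 + (sin t)\<^sup>2 = 4 * cos t + 5"
    using sin_cos_squared_add[of t] by (simp add: power2_eq_square algebra_simps)
  then show ?thesis
    by (simp add: cmod_def)
qed

lemma cos_eq_minus_1_iff:
  assumes "0 \<le> x" "x < 2 * pi"
  shows "cos x = -1 \<longleftrightarrow> x = pi"
proof
  assume cos: "cos x = -1"
  show "x = pi"
  proof (cases "x \<le> pi")
    case True
    show ?thesis
      by (rule cos_inj_pi) (use True cos assms in simp_all)
  next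
    case False
    have "2 * pi - x = pi"
      by (rule cos_inj_pi) (use cos False assms in simp_all)
    then show ?thesis
      by simp
  qed
qed simp

lemma order_prod_linear_factors:
  fixes f :: "'b \<Rightarrow> 'a :: idom"
  assumes "finite I"
  shows "Polynomial.order a (\<Prod>i\<in>I. [:- f i, 1:]) = card {i \<in> I. f i = a}"
  using assms
proof (induction I rule: finite_induct)
  case empty
  show ?case
    by (simp add: order_0I)
next
  case (insert x I)
  have "(\<Prod>i\<in>I. [:- f i, 1:]) \<noteq> 0"
    using insert.hyps(1) by auto
  then have "Polynomial.order a (\<Prod>i\<in>insert x I. [:- f i, 1:])
      = Polynomial.order a [:- f x, 1:] + Polynomial.order a (\<Prod>i\<in>I. [:- f i, 1:])"
    unfolding prod.insert[OF insert.hyps] by (intro order_mult) (subst mult_eq_0_iff, simp)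
  moreover have "Polynomial.order a [:- f x, 1:] = (if f x = a then 1 else 0)"
    using order_power_n_n[of a 1] by (auto intro: order_0I)
  moreover have "{i \<in> insert x I. f i = a}
      = (if f x = a then insert x {i \<in> I. f i = a} else {i \<in> I. f i = a})"
    by auto
  ultimately show ?case
    using insert by simp
qed

lemma char_poly_mat_diag: "char_poly (mat_diag m f) = (\<Prod>i<m. [:- f i, 1:])"
proof -
  have "upper_triangular (mat_diag m f)"
    unfolding upper_triangular_def mat_diag_def by auto
  then have "char_poly (mat_diag m f) = (\<Prod>a \<leftarrow> diag_mat (mat_diag m f). [:- a, 1:])"
    by (rule char_poly_upper_triangular[OF mat_diag_dim])
  also have "\<dots> = (\<Prod>i \<leftarrow> [0..<m]. [:- f i, 1:])"
    unfolding diag_mat_def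
    by (intro arg_cong[where f = prod_list] map_cong) (auto simp: mat_diag_def)
  also have "\<dots> = (\<Prod>i<m. [:- f i, 1:])"
    by (simp add: prod.distinct_set_conv_list[symmetric] atLeast0LessThan)
  finally show ?thesis .
qed

lemma similar_mat_diag_if_eigenbasis:
  fixes A :: "'a :: field mat"
  assumes A: "A \<in> carrier_mat m m" and P: "P \<in> carrier_mat m m" and Q: "Q \<in> carrier_mat m m"
    and QP: "Q * P = 1\<^sub>m m" and AP: "A * P = P * mat_diag m f"
  shows "similar_mat A (mat_diag m f)"
proof (rule similar_matI)
  show PQ: "P * Q = 1\<^sub>m m"
    by (rule mat_mult_left_right_inverse[OF Q P QP])
  have "A = A * (P * Q)"
    using A by (simp add: PQ)
  also have "\<dots> = (A * P) * Q"
    using A P Q by (simp add: assoc_mult_mat)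
  also have "\<dots> = P * mat_diag m f * Q"
    unfolding AP ..
  finally show "A = P * mat_diag m f * Q" .
qed (use A P Q QP in simp_all)

lemma kernel_dim_char_matrix_simple_root:
  fixes A :: "'a :: conjugatable_ordered_field mat"
  assumes A: "A \<in> carrier_mat m m" and splits: "char_poly A = (\<Prod>a \<leftarrow> as. [:- a, 1:])"
    and simple: "Polynomial.order e (char_poly A) = 1"
  shows "kernel_dim (char_matrix A e) = 1"
proof -
  obtain n_as where jnf: "jordan_nf A n_as"
    using jordan_nf_exists[OF A splits] by blast
  define sizes where "sizes = map fst [(k, a) \<leftarrow> n_as. a = e]"
  have pos: "\<forall>k \<in> set sizes. k \<noteq> 0"
    using jnf unfolding jordan_nf_def sizes_def by force
  have "sum_list sizes = 1"
    using jordan_nf_order[OF jnf, of e] simple unfolding sizes_def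
    by (simp add: case_prod_unfold)
  then obtain k ks where sizes: "sizes = k # ks"
    by (cases sizes) auto
  moreover have "k \<noteq> 0"
    using pos sizes by simp
  moreover have "k + sum_list ks = 1"
    using \<open>sum_list sizes = 1\<close> sizes by simp
  ultimately have "k = 1" "sum_list ks = 0"
    by linarith+
  with pos have "sizes = [1]"
    unfolding sizes by (cases ks) auto
  then have "dim_gen_eigenspace A e 1 = 1"
    unfolding dim_gen_eigenspace[OF jnf] sizes_def[symmetric] by simp
  then show ?thesis
    using char_matrix_closed[OF A] by (simp add: dim_gen_eigenspace_def)
qed

definition unit_root :: "nat \<Rightarrow> complex" where
  "unit_root n = cis (2 * pi / real n)"

lemma unit_root_power: "unit_root n ^ m = cis (2 * pi * real m / real n)"
  unfolding unit_root_def DeMoivre by (simp add: mult_ac)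

lemma unit_root_power_power_n: "(unit_root n ^ j) ^ n = 1"
proof (cases "n = 0")
  case False
  then have "(unit_root n ^ j) ^ n = cis (2 * pi * real j)"
    by (simp add: unit_root_power DeMoivre)
  then show ?thesis
    by simp
qed simp

lemma norm_unit_root_power [simp]: "norm (unit_root n ^ j) = 1"
  by (simp add: unit_root_power)

lemma unit_root_power_inj:
  assumes "j < n" "j' < n" "unit_root n ^ j = unit_root n ^ j'"
  shows "j = j'"
proof -
  have "inj_on (\<lambda>k. cis (2 * pi * real k / real n)) {..<n}"
    using bij_betw_roots_unity[of n] assms(1) by (simp add: bij_betw_def)
  then show ?thesis
    using assms unfolding unit_root_power inj_on_def by blast
qed

lemma cnj_unit_root_power_mult: "cnj (unit_root n ^ j) * unit_root n ^ j = 1"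
  by (rule cnj_mult_self_eq_1) simp

lemma cnj_unit_root_power_mult_eq_1_iff:
  assumes "j < n" "j' < n"
  shows "cnj (unit_root n ^ j') * unit_root n ^ j = 1 \<longleftrightarrow> j' = j"
proof
  assume z: "cnj (unit_root n ^ j') * unit_root n ^ j = 1"
  have "unit_root n ^ j = (cnj (unit_root n ^ j') * unit_root n ^ j') * unit_root n ^ j"
    by (simp only: cnj_unit_root_power_mult mult_1_left)
  also have "\<dots> = unit_root n ^ j' * (cnj (unit_root n ^ j') * unit_root n ^ j)"
    by (simp only: mult_ac)
  also have "\<dots> = unit_root n ^ j'"
    unfolding z by simp
  finally show "j' = j"
    using unit_root_power_inj[OF assms] by simp
next
  assume "j' = j"
  then show "cnj (unit_root n ^ j') * unit_root n ^ j = 1"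
    by (simp only: cnj_unit_root_power_mult)
qed

lemma F_adj_carrier: "F_adj n \<in> carrier_mat (2 * n) (2 * n)"
  unfolding F_adj_def by simp

lemma F_adj_even_row:
  assumes "n \<ge> 2" "k < n" "r < 2 * n"
  shows "F_adj n $$ (2 * k, r) =
    (if r = 2 * k + 1 then 2 else if r = 2 * ((k + n - 1) mod n) + 1 then 1 else 0)"
proof -
  have "(2 * k + 1) mod (2 * n) = 2 * k + 1"
    using assms by simp
  moreover have "(r + 1) mod (2 * n) = (if r + 1 = 2 * n then 0 else r + 1)"
    using assms by (auto simp: mod_Suc)
  moreover have "(k + n - 1) mod n = (if k = 0 then n - 1 else k - 1)"
    using assms by (cases k) auto
  ultimately show ?thesis
    using assms unfolding F_adj_def by auto
qed

lemma F_adj_odd_row: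
  assumes "n \<ge> 2" "k < n" "r < 2 * n"
  shows "F_adj n $$ (2 * k + 1, r) =
    (if r = 2 * k then 2 else if r = 2 * ((k + 1) mod n) then 1 else 0)"
proof -
  have "(2 * k + 1 + 1) mod (2 * n) = 2 * ((k + 1) mod n)"
    by (simp add: mult_mod_right)
  moreover have "(r + 1) mod (2 * n) = (if r + 1 = 2 * n then 0 else r + 1)"
    using assms by (auto simp: mod_Suc)
  moreover have "(k + 1) mod n = (if k + 1 = n then 0 else k + 1)"
    using assms by (auto simp: mod_Suc)
  ultimately show ?thesis
    using assms unfolding F_adj_def by auto
qed

lemma F_adj_even_row_sum:
  fixes f :: "nat \<Rightarrow> 'a :: real_algebra_1"
  assumes "n \<ge> 2" "k < n"
  shows "(\<Sum>r<2 * n. of_real (F_adj n $$ (2 * k, r)) * f r)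
    = 2 * f (2 * k + 1) + f (2 * ((k + n - 1) mod n) + 1)"
proof -
  define p where "p = 2 * ((k + n - 1) mod n) + 1"
  have p: "p < 2 * n" "p \<noteq> 2 * k + 1"
    using assms unfolding p_def by (cases k; simp)+
  have "(\<Sum>r<2 * n. of_real (F_adj n $$ (2 * k, r)) * f r)
      = (\<Sum>r<2 * n. (if r = 2 * k + 1 then 2 * f r else 0) + (if r = p then f r else 0))"
    using F_adj_even_row[OF assms] p unfolding p_def[symmetric]
    by (intro sum.cong refl) simp
  also have "\<dots> = 2 * f (2 * k + 1) + f p"
    using assms p by (simp add: sum.distrib)
  finally show ?thesis
    unfolding p_def .
qed

lemma F_adj_odd_row_sum:
  fixes f :: "nat \<Rightarrow> 'a :: real_algebra_1"
  assumes "n \<ge> 2" "k < n"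
  shows "(\<Sum>r<2 * n. of_real (F_adj n $$ (2 * k + 1, r)) * f r)
    = 2 * f (2 * k) + f (2 * ((k + 1) mod n))"
proof -
  define p where "p = 2 * ((k + 1) mod n)"
  have p: "p < 2 * n" "p \<noteq> 2 * k"
    using assms unfolding p_def by (auto simp: mod_Suc)
  have "(\<Sum>r<2 * n. of_real (F_adj n $$ (2 * k + 1, r)) * f r)
      = (\<Sum>r<2 * n. (if r = 2 * k then 2 * f r else 0) + (if r = p then f r else 0))"
    using F_adj_odd_row[OF assms] p unfolding p_def[symmetric]
    by (intro sum.cong refl) simp
  also have "\<dots> = 2 * f (2 * k) + f p"
    using assms p by (simp add: sum.distrib)
  finally show ?thesis
    unfolding p_def .
qed

definition F_eig_norm :: "nat \<Rightarrow> nat \<Rightarrow> real" where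
  "F_eig_norm n j = sqrt (4 * cos (2 * pi * real j / real n) + 5)"

definition F_phase :: "nat \<Rightarrow> nat \<Rightarrow> complex" where
  "F_phase n j = sgn (2 + unit_root n ^ j)"

lemma F_eig_norm_eq_cmod: "F_eig_norm n j = cmod (2 + unit_root n ^ j)"
  unfolding F_eig_norm_def unit_root_power cmod_two_plus_cis ..

lemma F_eig_norm_pos: "F_eig_norm n j > 0"
proof -
  have "4 * cos (2 * pi * real j / real n) + 5 > 0"
    using cos_ge_minus_one[of "2 * pi * real j / real n"] by linarith
  then show ?thesis
    unfolding F_eig_norm_def by simp
qed

lemma F_phase_mult_eig_norm: "F_phase n j * of_real (F_eig_norm n j) = 2 + unit_root n ^ j"
  using F_eig_norm_pos[of n j] unfolding F_phase_def F_eig_norm_eq_cmod by (simp add: sgn_eq)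

lemma cnj_F_phase_mult: "cnj (F_phase n j) * F_phase n j = 1"
proof (rule cnj_mult_self_eq_1)
  show "cmod (F_phase n j) = 1"
    using F_eig_norm_pos[of n j] unfolding F_phase_def F_eig_norm_eq_cmod by (simp add: norm_sgn)
qed

lemma F_phase_mult_cnj: "F_phase n j * (2 + cnj (unit_root n ^ j)) = of_real (F_eig_norm n j)"
proof -
  have "2 + cnj (unit_root n ^ j) = cnj (F_phase n j * of_real (F_eig_norm n j))"
    unfolding F_phase_mult_eig_norm by simp
  also have "\<dots> = cnj (F_phase n j) * of_real (F_eig_norm n j)"
    by simp
  finally show ?thesis
    using cnj_F_phase_mult[of n j] by (simp add: mult.left_commute mult.commute)
qed

text \<open>Columns 2j and 2j + 1 of the eigenbasis belong to the eigenvalues |2 + w^j| and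
  -|2 + w^j|, where w = unit_root n.\<close>

definition F_eigvec :: "nat \<Rightarrow> nat \<Rightarrow> nat \<Rightarrow> complex" where
  "F_eigvec n c r = (unit_root n ^ (c div 2)) ^ (r div 2) *
     (if even r then 1 else (-1) ^ c * F_phase n (c div 2))"

definition F_eigval :: "nat \<Rightarrow> nat \<Rightarrow> real" where
  "F_eigval n c = (-1) ^ c * F_eig_norm n (c div 2)"

lemma F_eigvec_eigen:
  assumes n: "n \<ge> 2" and i: "i < 2 * n"
  shows "(\<Sum>r<2 * n. of_real (F_adj n $$ (i, r)) * F_eigvec n c r)
    = of_real (F_eigval n c) * F_eigvec n c i"
proof -
  define w where "w = unit_root n ^ (c div 2)"
  define \<sigma> :: complex where "\<sigma> = (-1) ^ c"
  define \<phi> where "\<phi> = F_phase n (c div 2)"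
  define s where "s = complex_of_real (F_eig_norm n (c div 2))"
  have v: "F_eigvec n c (2 * k) = w ^ k" "F_eigvec n c (2 * k + 1) = \<sigma> * \<phi> * w ^ k" for k
    unfolding F_eigvec_def w_def \<sigma>_def \<phi>_def by simp_all
  have eigval: "of_real (F_eigval n c) = \<sigma> * s"
    unfolding F_eigval_def \<sigma>_def s_def by simp
  have w_n: "w ^ n = 1"
    unfolding w_def by (rule unit_root_power_power_n)
  define k where "k = i div 2"
  have k: "k < n" "i = 2 * k \<or> i = 2 * k + 1"
    using i unfolding k_def by auto
  from k(2) show ?thesis
  proof
    assume i: "i = 2 * k"
    have pred: "w ^ ((k + n - 1) mod n) = w ^ k * cnj w"
      using n unfolding w_def by (intro cnj_power_mult_pred_mod unit_root_power_power_n) simp_all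
    have "(\<Sum>r<2 * n. of_real (F_adj n $$ (i, r)) * F_eigvec n c r)
        = \<sigma> * w ^ k * (\<phi> * (2 + cnj w))"
      unfolding i F_adj_even_row_sum[OF n k(1)] v pred by (simp add: algebra_simps)
    also have "\<phi> * (2 + cnj w) = s"
      unfolding \<phi>_def w_def s_def by (rule F_phase_mult_cnj)
    finally show ?thesis
      unfolding eigval i v by (simp add: ac_simps)
  next
    assume i: "i = 2 * k + 1"
    have succ: "w ^ ((k + 1) mod n) = w ^ k * w"
      by (simp add: power_mod_eq_if_power_eq_1[OF w_n])
    have "(\<Sum>r<2 * n. of_real (F_adj n $$ (i, r)) * F_eigvec n c r) = w ^ k * (2 + w)"
      unfolding i F_adj_odd_row_sum[OF n k(1)] v succ by (simp add: algebra_simps)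
    also have "2 + w = (\<sigma> * \<sigma>) * \<phi> * s"
      unfolding \<sigma>_def \<phi>_def w_def s_def F_phase_mult_eig_norm[symmetric]
      by (simp flip: power_add)
    finally show ?thesis
      unfolding eigval i v by (simp add: ac_simps)
  qed
qed

lemma F_eigvec_orthogonal:
  assumes c: "c < 2 * n" and c': "c' < 2 * n"
  shows "(\<Sum>r<2 * n. cnj (F_eigvec n c' r) * F_eigvec n c r) = (if c' = c then 2 * n else 0)"
proof -
  define z where "z = cnj (unit_root n ^ (c' div 2)) * unit_root n ^ (c div 2)"
  define K where "K = 1 + (-1) ^ c' * (-1) ^ c * (cnj (F_phase n (c' div 2)) * F_phase n (c div 2))"
  have "(\<Sum>r<2 * n. cnj (F_eigvec n c' r) * F_eigvec n c r) = (\<Sum>k<n. K * z ^ k)"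
    unfolding sum_lessThan_double
    by (intro sum.cong refl) (simp add: F_eigvec_def K_def z_def power_mult_distrib algebra_simps)
  also have "\<dots> = K * (\<Sum>k<n. z ^ k)"
    by (simp add: sum_distrib_left)
  also have "\<dots> = (if c' = c then 2 * n else 0)"
  proof (cases "c' div 2 = c div 2")
    case True
    have "(-1) ^ c' * (-1) ^ c = (if c' = c then 1 else (-1 :: complex))"
    proof (cases "c' = c")
      case False
      then have "odd (c' + c)"
        using True by presburger
      then show ?thesis
        using False by (simp flip: power_add)
    qed (simp flip: power_add)
    then have "K = (if c' = c then 2 else 0)"
      unfolding K_def True by (simp add: cnj_F_phase_mult)
    moreover have "z = 1"
      unfolding z_def True by (rule cnj_unit_root_power_mult)
    ultimately show ?thesis
      by simp
  next
    case False
    have "c div 2 < n" "c' div 2 < n"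
      using c c' by auto
    then have "z \<noteq> 1"
      using False unfolding z_def by (subst cnj_unit_root_power_mult_eq_1_iff) simp_all
    moreover have "z ^ n = 1"
      unfolding z_def
      by (simp add: power_mult_distrib unit_root_power_power_n flip: complex_cnj_power)
    ultimately have "(\<Sum>k<n. z ^ k) = 0"
      by (simp add: sum_gp_strict)
    then show ?thesis
      using False by auto
  qed
  finally show ?thesis .
qed

definition F_eigvec_mat :: "nat \<Rightarrow> complex mat" where
  "F_eigvec_mat n = mat (2 * n) (2 * n) (\<lambda>(r, c). F_eigvec n c r)"

lemma F_eigvec_mat_left_inverse:
  "mat (2 * n) (2 * n) (\<lambda>(c, r). cnj (F_eigvec n c r) / of_nat (2 * n)) * F_eigvec_mat n
    = 1\<^sub>m (2 * n)"
  (is "?Q * ?P = _")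
proof (rule eq_matI)
  fix c' c
  assume "c' < dim_row (1\<^sub>m (2 * n))" "c < dim_col (1\<^sub>m (2 * n))"
  then have c: "c' < 2 * n" "c < 2 * n"
    by simp_all
  have "(?Q * ?P) $$ (c', c)
      = (\<Sum>r<2 * n. cnj (F_eigvec n c' r) * F_eigvec n c r) / of_nat (2 * n)"
    using c by (simp add: F_eigvec_mat_def scalar_prod_def lessThan_atLeast0 sum_divide_distrib)
  then show "(?Q * ?P) $$ (c', c) = 1\<^sub>m (2 * n) $$ (c', c)"
    using c by (simp add: F_eigvec_orthogonal)
qed (simp_all add: F_eigvec_mat_def)

lemma F_adj_mult_eigvec_mat:
  assumes n: "n \<ge> 2"
  shows "map_mat complex_of_real (F_adj n) * F_eigvec_mat n
    = F_eigvec_mat n * mat_diag (2 * n) (\<lambda>c. of_real (F_eigval n c))"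
proof (rule eq_matI)
  have P: "F_eigvec_mat n \<in> carrier_mat (2 * n) (2 * n)"
    by (simp add: F_eigvec_mat_def)
  fix i c
  assume "i < dim_row (F_eigvec_mat n * mat_diag (2 * n) (\<lambda>c. of_real (F_eigval n c)))"
    "c < dim_col (F_eigvec_mat n * mat_diag (2 * n) (\<lambda>c. of_real (F_eigval n c)))"
  then have i: "i < 2 * n" and c: "c < 2 * n"
    using P by (simp_all add: mat_diag_def)
  have "(map_mat complex_of_real (F_adj n) * F_eigvec_mat n) $$ (i, c)
      = (\<Sum>r<2 * n. of_real (F_adj n $$ (i, r)) * F_eigvec n c r)"
    using i c F_adj_carrier[of n]
    by (simp add: F_eigvec_mat_def scalar_prod_def lessThan_atLeast0)
  also have "\<dots> = of_real (F_eigval n c) * F_eigvec n c i"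
    by (rule F_eigvec_eigen[OF n i])
  also have "\<dots> = (F_eigvec_mat n * mat_diag (2 * n) (\<lambda>c. of_real (F_eigval n c))) $$ (i, c)"
    unfolding mat_diag_mult_right[OF P] using i c by (simp add: F_eigvec_mat_def mult.commute)
  finally show "(map_mat complex_of_real (F_adj n) * F_eigvec_mat n) $$ (i, c)
      = (F_eigvec_mat n * mat_diag (2 * n) (\<lambda>c. of_real (F_eigval n c))) $$ (i, c)" .
qed (use F_adj_carrier[of n] in \<open>simp_all add: F_eigvec_mat_def mat_diag_def\<close>)

lemma char_poly_F_adj:
  assumes "n \<ge> 2"
  shows "char_poly (F_adj n) = (\<Prod>c<2 * n. [:- F_eigval n c, 1:])"
proof -
  interpret of_real_poly: map_poly_inj_idom_hom "of_real :: real \<Rightarrow> complex" ..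
  have "similar_mat (map_mat complex_of_real (F_adj n))
      (mat_diag (2 * n) (\<lambda>c. of_real (F_eigval n c)))"
    by (rule similar_mat_diag_if_eigenbasis[OF _ _ _
          F_eigvec_mat_left_inverse F_adj_mult_eigvec_mat[OF assms]])
      (use F_adj_carrier[of n] in \<open>simp_all add: F_eigvec_mat_def\<close>)
  then have "char_poly (map_mat complex_of_real (F_adj n))
      = char_poly (mat_diag (2 * n) (\<lambda>c. of_real (F_eigval n c)))"
    by (rule char_poly_similar)
  then have "map_poly complex_of_real (char_poly (F_adj n))
      = map_poly complex_of_real (\<Prod>c<2 * n. [:- F_eigval n c, 1:])"
    by (simp add: of_real_hom.char_poly_hom[OF F_adj_carrier] char_poly_mat_diag
        of_real_poly.hom_prod)
  then show ?thesis
    by simp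
qed

lemma F_eig_norm_eq_1_iff:
  assumes j: "j < n"
  shows "F_eig_norm n j = 1 \<longleftrightarrow> 2 * j = n"
proof -
  have n: "real n > 0"
    using j by simp
  have "F_eig_norm n j = 1 \<longleftrightarrow> cos (2 * pi * real j / real n) = -1"
    unfolding F_eig_norm_def by auto
  also have "\<dots> \<longleftrightarrow> 2 * pi * real j / real n = pi"
  proof (rule cos_eq_minus_1_iff)
    have "2 * pi * real j < 2 * pi * real n"
      using j by simp
    then show "2 * pi * real j / real n < 2 * pi"
      using n by (simp add: divide_less_eq)
  qed simp
  also have "\<dots> \<longleftrightarrow> 2 * real j = real n"
    using n by (auto simp: field_simps)
  finally show ?thesis
    by linarith
qed

lemma F_eigval_eq_1_iff:
  assumes "c < 2 * n"
  shows "F_eigval n c = 1 \<longleftrightarrow> even n \<and> c = n"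
proof (cases "even c")
  case True
  then have "F_eigval n c = 1 \<longleftrightarrow> 2 * (c div 2) = n"
    using assms by (simp add: F_eigval_def F_eig_norm_eq_1_iff)
  then show ?thesis
    using True by auto
next
  case False
  then have "F_eigval n c < 0"
    using F_eig_norm_pos[of n "c div 2"] by (simp add: F_eigval_def)
  then show ?thesis
    using False by auto
qed

theorem proposition6p1:
  fixes n :: nat
  assumes "n \<ge> 2"
  shows "char_poly (F_adj n) =
           (\<Prod>j<n. [:- sqrt (4 * cos (2 * pi * real j / real n) + 5), 1:]
                   * [:  sqrt (4 * cos (2 * pi * real j / real n) + 5), 1:])
         \<and> (eigenvalue (F_adj n) 1 \<longleftrightarrow> even n)
         \<and> (even n \<longrightarrow> kernel_dim (char_matrix (F_adj n) 1) = 1)"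
proof -
  note char_poly = char_poly_F_adj[OF assms]
  have "{c \<in> {..<2 * n}. F_eigval n c = 1} = (if even n then {n} else {})"
    using assms by (auto simp: F_eigval_eq_1_iff)
  then have order: "Polynomial.order 1 (char_poly (F_adj n)) = (if even n then 1 else 0)"
    unfolding char_poly order_prod_linear_factors[OF finite_lessThan] by simp
  have "char_poly (F_adj n) = (\<Prod>j<n. [:- sqrt (4 * cos (2 * pi * real j / real n) + 5), 1:]
                   * [:  sqrt (4 * cos (2 * pi * real j / real n) + 5), 1:])"
    unfolding char_poly prod_lessThan_double by (simp add: F_eigval_def F_eig_norm_def)
  moreover have "eigenvalue (F_adj n) 1 \<longleftrightarrow> even n"
    using order degree_monic_char_poly[OF F_adj_carrier, of n]
    by (auto simp: eigenvalue_root_char_poly[OF F_adj_carrier] order_root)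
  moreover have "kernel_dim (char_matrix (F_adj n) 1) = 1" if "even n"
  proof (rule kernel_dim_char_matrix_simple_root[OF F_adj_carrier])
    show "char_poly (F_adj n) = (\<Prod>a \<leftarrow> map (F_eigval n) [0..<2 * n]. [:- a, 1:])"
      unfolding char_poly
      by (simp add: prod.distinct_set_conv_list[symmetric] atLeast0LessThan comp_def)
    show "Polynomial.order 1 (char_poly (F_adj n)) = 1"
      using order that by simp
  qed
  ultimately show ?thesis
    by blast
qed

end
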